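(* Let $d_d=2t_d+1$ with $t_d\ge0$, let $f:\mathbb{F}_q^k\to\mathrm{Im}(f)$ be a $d_d$-locally binary function with $|\mathrm{Im}(f)|\ge2$, and suppose there exists a perfect linear $[n,k,d_d]$ code over $\mathbb{F}_q$, i.e. $\sum_{i=0}^{t_d}\binom{n}{i}(q-1)^i=q^{n-k}$. Then $r_f(k:d_d,d_d+1)=n-k+1$.
   Context: $d(\cdot,\cdot)$ is Hamming distance. $B_f(u,\rho)=\{f(u'):d(u,u')\le\rho\}$; $f$ is $\rho$-locally binary if $|B_f(u,\rho)|\le2$ for all $u$. For integers $0\le d_d\le d_f$, an $(f\!:d_d,d_f)$-FCC with redundancy $r$ is a systematic encoding $\mathfrak{C}_f(u)=(u,p_u)\in\mathbb{F}_q^{k+r}$ with $d(\mathfrak{C}_f(u_1),\mathfrak{C}_f(u_2))\ge d_d$ whenever $u_1\ne u_2$ and $\ge d_f$ whenever $f(u_1)\ne f(u_2)$; $r_f(k:d_d,d_f)$ is the minimum such $r$. *)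

theory Defs
  imports Main
begin

text \<open>Vectors over F_q are lists over a finite field type 'a; F_q^k = vectors k.\<close>

definition vectors :: "nat \<Rightarrow> 'a list set" where
  "vectors k = {u. length u = k}"

definition hamming :: "'a list \<Rightarrow> 'a list \<Rightarrow> nat" where
  "hamming x y = card {i. i < length x \<and> i < length y \<and> x ! i \<noteq> y ! i}"

definition fball :: "nat \<Rightarrow> ('a list \<Rightarrow> 'b) \<Rightarrow> 'a list \<Rightarrow> nat \<Rightarrow> 'b set" where
  "fball k f u \<rho> = {f u' | u'. u' \<in> vectors k \<and> hamming u u' \<le> \<rho>}"

definition locally_binary :: "nat \<Rightarrow> ('a list \<Rightarrow> 'b) \<Rightarrow> nat \<Rightarrow> bool" where
  "locally_binary k f \<rho> \<longleftrightarrow> (\<forall>u \<in> vectors k. card (fball k f u \<rho>) \<le> 2)"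

text \<open>An (f:dd,df)-FCC with redundancy r: systematic encoding u \<mapsto> (u, p u).\<close>
definition is_FCC :: "nat \<Rightarrow> ('a list \<Rightarrow> 'b) \<Rightarrow> nat \<Rightarrow> nat \<Rightarrow> nat \<Rightarrow> ('a list \<Rightarrow> 'a list) \<Rightarrow> bool" where
  "is_FCC k f dd df r p \<longleftrightarrow>
     (\<forall>u \<in> vectors k. length (p u) = r) \<and>
     (\<forall>u1 \<in> vectors k. \<forall>u2 \<in> vectors k.
        (u1 \<noteq> u2 \<longrightarrow> hamming (u1 @ p u1) (u2 @ p u2) \<ge> dd) \<and>
        (f u1 \<noteq> f u2 \<longrightarrow> hamming (u1 @ p u1) (u2 @ p u2) \<ge> df))"

definition min_redundancy :: "'a itself \<Rightarrow> nat \<Rightarrow> ('a list \<Rightarrow> 'b) \<Rightarrow> nat \<Rightarrow> nat \<Rightarrow> nat" where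
  "min_redundancy _ k f dd df = (LEAST r. \<exists>p :: 'a list \<Rightarrow> 'a list. is_FCC k f dd df r p)"

text \<open>Linear [n,k,d] code over the field 'a: a subspace of F_q^n of dimension k
  (equivalently, cardinality q^k) with minimum distance d.\<close>
definition linear_code :: "nat \<Rightarrow> nat \<Rightarrow> nat \<Rightarrow> ('a::{finite,field}) list set \<Rightarrow> bool" where
  "linear_code n k d C \<longleftrightarrow>
     C \<subseteq> vectors n \<and> replicate n 0 \<in> C \<and>
     (\<forall>x \<in> C. \<forall>y \<in> C. map2 (+) x y \<in> C) \<and>
     (\<forall>c. \<forall>x \<in> C. map ((*) c) x \<in> C) \<and>
     card C = card (UNIV :: 'a set) ^ k \<and>
     (\<exists>x \<in> C. \<exists>y \<in> C. x \<noteq> y \<and> hamming x y = d) \<and>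
     (\<forall>x \<in> C. \<forall>y \<in> C. x \<noteq> y \<longrightarrow> hamming x y \<ge> d)"

text \<open>Perfect: the balls of radius t = (d-1)/2 around codewords tile F_q^n,
  i.e. the sphere-packing bound is attained.\<close>
definition perfect_linear_code :: "nat \<Rightarrow> nat \<Rightarrow> nat \<Rightarrow> ('a::{finite,field}) list set \<Rightarrow> bool" where
  "perfect_linear_code n k d C \<longleftrightarrow> linear_code n k d C \<and>
     (\<Sum>i=0..(d - 1) div 2. (n choose i) * (card (UNIV :: 'a set) - 1) ^ i) = card (UNIV :: 'a set) ^ (n - k)"

end

theory Submission
  imports Defs "HOL-Library.FuncSet"
begin

text \<open>
  Upper bound: a linear code has an information set, so the perfect code yields a systematic
  encoding with redundancy \<open>n - k\<close> and distance \<open>d\<^sub>d\<close>, and one extra bit suffices.  Indeed, if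
  \<open>d(u\<^sub>1, u\<^sub>2) \<le> d\<^sub>d\<close> and \<open>f u\<^sub>1 \<noteq> f u\<^sub>2\<close>, local binarity gives
  \<open>B\<^sub>f(u\<^sub>1, d\<^sub>d) = B\<^sub>f(u\<^sub>2, d\<^sub>d) = {f u\<^sub>1, f u\<^sub>2}\<close>, so the bit recording whether \<open>f u\<close> is the element
  chosen from \<open>B\<^sub>f(u, d\<^sub>d)\<close> differs on \<open>u\<^sub>1\<close> and \<open>u\<^sub>2\<close>.

  Lower bound: if the redundancy \<open>r\<close> were at most \<open>n - k\<close>, the codewords \<open>(u, p u)\<close> of length
  \<open>m = k + r\<close> would have pairwise distance \<open>\<ge> 2t\<^sub>d + 1\<close>, hence disjoint balls of radius \<open>t\<^sub>d\<close>, and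
  perfectness of the \<open>[n, k]\<close> code forces \<open>q\<^sup>m \<le> q\<^sup>k V(m, t\<^sub>d)\<close>: these balls cover \<open>F\<^sub>q\<^sup>m\<close>.
  Walking from one codeword to another by changing one coordinate at a time, consecutive words lie
  in balls whose centres are at distance \<open>\<le> 2t\<^sub>d + 1 < d\<^sub>d + 1\<close>, so \<open>f\<close> never changes along the
  walk and is constant, contradicting \<open>|Im f| \<ge> 2\<close>.
\<close>

section \<open>Hamming distance\<close>

lemma hamming_Nil [simp]: "hamming [] ys = 0" "hamming xs [] = 0"
  by (auto simp: hamming_def)

lemma hamming_Cons: "hamming (x # xs) (y # ys) = (if x = y then 0 else 1) + hamming xs ys"
proof -
  have "{i. i < length (x # xs) \<and> i < length (y # ys) \<and> (x # xs) ! i \<noteq> (y # ys) ! i}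
      = (if x = y then {} else {0}) \<union> Suc ` {i. i < length xs \<and> i < length ys \<and> xs ! i \<noteq> ys ! i}"
    (is "?lhs = ?rhs")
  proof (rule set_eqI)
    fix i
    show "i \<in> ?lhs \<longleftrightarrow> i \<in> ?rhs"
      by (cases i) auto
  qed
  then show ?thesis
    unfolding hamming_def by (simp add: card_image)
qed

lemma hamming_append:
  "length xs = length ys \<Longrightarrow> hamming (xs @ xs') (ys @ ys') = hamming xs ys + hamming xs' ys'"
  by (induction xs ys rule: list_induct2) (auto simp: hamming_Cons)

lemma hamming_eq_card:
  "length x = length y \<Longrightarrow> hamming x y = card {i. i < length x \<and> x ! i \<noteq> y ! i}"
  unfolding hamming_def by simp

lemma hamming_sym: "hamming x y = hamming y x"
  unfolding hamming_def by (metis (full_types))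

lemma hamming_self [simp]: "hamming x x = 0"
  unfolding hamming_def by simp

lemma hamming_eq_0_iff: "length x = length y \<Longrightarrow> hamming x y = 0 \<longleftrightarrow> x = y"
  by (auto simp: hamming_eq_card intro: nth_equalityI)

lemma hamming_triangle:
  assumes "length x = length y" "length y = length z"
  shows "hamming x z \<le> hamming x y + hamming y z"
proof -
  have "{i. i < length x \<and> x ! i \<noteq> z ! i}
      \<subseteq> {i. i < length x \<and> x ! i \<noteq> y ! i} \<union> {i. i < length y \<and> y ! i \<noteq> z ! i}"
    using assms by auto
  then have "card {i. i < length x \<and> x ! i \<noteq> z ! i}
      \<le> card ({i. i < length x \<and> x ! i \<noteq> y ! i} \<union> {i. i < length y \<and> y ! i \<noteq> z ! i})"
    by (intro card_mono) auto
  also have "\<dots> \<le> card {i. i < length x \<and> x ! i \<noteq> y ! i} + card {i. i < length y \<and> y ! i \<noteq> z ! i}"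
    by (rule card_Un_le)
  finally show ?thesis
    using assms by (simp add: hamming_eq_card)
qed

lemma hamming_list_update_le: "hamming y (y[i := a]) \<le> 1"
proof -
  have "{j. j < length y \<and> j < length (y[i := a]) \<and> y ! j \<noteq> y[i := a] ! j} \<subseteq> {i}"
    by auto (metis nth_list_update_neq)
  then show ?thesis
    unfolding hamming_def using card_mono[of "{i}"] by fastforce
qed

lemma hamming_list_update_nth:
  assumes "length y = length z" "i < length y" "y ! i \<noteq> z ! i"
  shows "hamming (y[i := z ! i]) z = hamming y z - 1"
proof -
  have "{j. j < length y \<and> y[i := z ! i] ! j \<noteq> z ! j} = {j. j < length y \<and> y ! j \<noteq> z ! j} - {i}"
    using assms by (auto simp: nth_list_update)
  then show ?thesis
    using assms by (simp add: hamming_eq_card)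
qed

lemma hamming_map_nth_permute:
  assumes "distinct L" "set L = {..<length x}" "length y = length x"
  shows "hamming (map ((!) x) L) (map ((!) y) L) = hamming x y"
proof -
  let ?D = "{j. j < length L \<and> x ! (L ! j) \<noteq> y ! (L ! j)}"
  have bij: "bij_betw ((!) L) {..<length L} {..<length x}"
    using assms by (simp add: bij_betw_nth)
  have "hamming (map ((!) x) L) (map ((!) y) L) = card ?D"
    by (simp add: hamming_eq_card cong: conj_cong)
  also have "\<dots> = card ((!) L ` ?D)"
    using bij by (intro card_image[symmetric]) (auto simp: bij_betw_def inj_on_def)
  also have "(!) L ` ?D = {i. i < length x \<and> x ! i \<noteq> y ! i}"
    using bij by (auto simp: bij_betw_def)
  finally show ?thesis
    using assms by (simp add: hamming_eq_card)
qed

section \<open>Hamming balls and perfect packings\<close>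

lemma finite_vectors: "finite (vectors k :: 'a::finite list set)"
  using finite_lists_length_eq[of "UNIV :: 'a set" k] by (simp add: vectors_def)

lemma card_vectors: "card (vectors k :: 'a::finite list set) = card (UNIV :: 'a set) ^ k"
  using card_lists_length_eq[of "UNIV :: 'a set" k] by (simp add: vectors_def)

definition ball_volume :: "nat \<Rightarrow> nat \<Rightarrow> nat \<Rightarrow> nat" where
  "ball_volume q m t = (\<Sum>i=0..t. (m choose i) * (q - 1) ^ i)"

lemma ball_volume_0 [simp]: "ball_volume q 0 t = 1"
  by (simp add: ball_volume_def sum.atLeast_Suc_atMost[of 0 t, simplified])

lemma ball_volume_Suc:
  "ball_volume q (Suc m) t = ball_volume q m t + (if t = 0 then 0 else (q - 1) * ball_volume q m (t - 1))"
proof (cases t)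
  case 0
  then show ?thesis by (simp add: ball_volume_def)
next
  case (Suc s)
  have "ball_volume q (Suc m) (Suc s) = 1 + (\<Sum>i=0..s. (Suc m choose Suc i) * (q - 1) ^ Suc i)"
    unfolding ball_volume_def sum.atLeast0_atMost_Suc_shift by simp
  also have "\<dots> = (\<Sum>i=0..s. (m choose i) * (q - 1) ^ Suc i)
      + (1 + (\<Sum>i=0..s. (m choose Suc i) * (q - 1) ^ Suc i))"
    by (simp add: binomial_Suc_Suc add_mult_distrib sum.distrib)
  also have "(\<Sum>i=0..s. (m choose i) * (q - 1) ^ Suc i) = (q - 1) * ball_volume q m s"
    by (simp add: ball_volume_def sum_distrib_left algebra_simps)
  also have "1 + (\<Sum>i=0..s. (m choose Suc i) * (q - 1) ^ Suc i) = ball_volume q m (Suc s)"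
    using sum.atLeast0_atMost_Suc_shift[of "\<lambda>i. (m choose i) * (q - 1) ^ i" s]
    by (simp add: ball_volume_def)
  finally show ?thesis
    using Suc by simp
qed

lemma ball_volume_mono: "s \<le> t \<Longrightarrow> ball_volume q m s \<le> ball_volume q m t"
  unfolding ball_volume_def by (intro sum_mono2) auto

lemma ball_volume_add_le:
  assumes "q \<ge> 1"
  shows "ball_volume q (m + j) t \<le> q ^ j * ball_volume q m t"
proof (induction j)
  case 0
  then show ?case by simp
next
  case (Suc j)
  have "ball_volume q (Suc (m + j)) t \<le> ball_volume q (m + j) t + (q - 1) * ball_volume q (m + j) t"
    using ball_volume_mono[of "t - 1" t q "m + j"] by (simp add: ball_volume_Suc)
  also have "\<dots> = q * ball_volume q (m + j) t"
    using assms by (simp add: algebra_simps)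
  also have "\<dots> \<le> q * (q ^ j * ball_volume q m t)"
    using Suc.IH by simp
  finally show ?case
    by simp
qed

definition hamming_ball :: "'a list \<Rightarrow> nat \<Rightarrow> 'a list set" where
  "hamming_ball x t = {y. length y = length x \<and> hamming x y \<le> t}"

lemma finite_hamming_ball: "finite (hamming_ball (x :: 'a::finite list) t)"
  by (rule finite_subset[OF _ finite_vectors[of "length x"]]) (auto simp: hamming_ball_def vectors_def)

lemma hamming_ball_Cons:
  "hamming_ball (x # xs) t = Cons x ` hamming_ball xs t
     \<union> (if t = 0 then {} else (\<lambda>(a, ys). a # ys) ` ((UNIV - {x}) \<times> hamming_ball xs (t - 1)))"
proof (rule set_eqI)
  fix y
  show "y \<in> hamming_ball (x # xs) t \<longleftrightarrow>
      y \<in> Cons x ` hamming_ball xs t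
        \<union> (if t = 0 then {} else (\<lambda>(a, ys). a # ys) ` ((UNIV - {x}) \<times> hamming_ball xs (t - 1)))"
    by (cases y) (auto simp: hamming_ball_def hamming_Cons image_iff)
qed

lemma card_hamming_ball:
  "card (hamming_ball (x :: 'a::finite list) t) = ball_volume (card (UNIV :: 'a set)) (length x) t"
proof (induction x arbitrary: t)
  case Nil
  have "hamming_ball ([] :: 'a list) t = {[]}"
    by (auto simp: hamming_ball_def)
  then show ?case
    by simp
next
  case (Cons x xs)
  let ?S = "(\<lambda>(a, ys). a # ys) ` ((UNIV - {x}) \<times> hamming_ball xs (t - 1))"
  have "card ?S = (card (UNIV :: 'a set) - 1) * card (hamming_ball xs (t - 1))"
    by (subst card_image) (auto simp: inj_on_def card_cartesian_product card_Diff_singleton)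
  moreover have "Cons x ` hamming_ball xs t \<inter> ?S = {}"
    by auto
  moreover have "finite ?S"
    by (intro finite_imageI finite_cartesian_product finite_hamming_ball) simp
  ultimately have "card (hamming_ball (x # xs) t)
      = card (hamming_ball xs t) + (if t = 0 then 0 else (card (UNIV :: 'a set) - 1) * card (hamming_ball xs (t - 1)))"
    unfolding hamming_ball_Cons by (simp add: card_Un_disjoint finite_hamming_ball card_image)
  then show ?case
    by (simp add: Cons.IH ball_volume_Suc)
qed

lemma disjoint_hamming_balls_cover:
  fixes c :: "'i \<Rightarrow> 'a::finite list"
  assumes "finite U"
    and len: "\<And>u. u \<in> U \<Longrightarrow> length (c u) = m"
    and dist: "\<And>u u'. u \<in> U \<Longrightarrow> u' \<in> U \<Longrightarrow> u \<noteq> u' \<Longrightarrow> 2 * t < hamming (c u) (c u')"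
    and vol: "card (UNIV :: 'a set) ^ m \<le> card U * ball_volume (card (UNIV :: 'a set)) m t"
  shows "(\<Union>u\<in>U. hamming_ball (c u) t) = vectors m"
proof (rule card_seteq)
  show "finite (vectors m :: 'a list set)"
    by (rule finite_vectors)
  show "(\<Union>u\<in>U. hamming_ball (c u) t) \<subseteq> vectors m"
    using len by (auto simp: hamming_ball_def vectors_def)
  have "hamming_ball (c u) t \<inter> hamming_ball (c u') t = {}"
    if u: "u \<in> U" "u' \<in> U" "u \<noteq> u'" for u u'
  proof (rule ccontr)
    assume "hamming_ball (c u) t \<inter> hamming_ball (c u') t \<noteq> {}"
    then obtain y where y: "y \<in> hamming_ball (c u) t" "y \<in> hamming_ball (c u') t"
      by blast
    have "hamming (c u) (c u') \<le> hamming (c u) y + hamming y (c u')"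
      using y len u by (intro hamming_triangle) (auto simp: hamming_ball_def)
    also have "\<dots> \<le> 2 * t"
      using y by (auto simp: hamming_ball_def hamming_sym)
    finally show False
      using dist[OF u] by simp
  qed
  then have "card (\<Union>u\<in>U. hamming_ball (c u) t) = card U * ball_volume (card (UNIV :: 'a set)) m t"
    using \<open>finite U\<close> len by (simp add: card_UN_disjoint finite_hamming_ball card_hamming_ball)
  then show "card (vectors m :: 'a list set) \<le> card (\<Union>u\<in>U. hamming_ball (c u) t)"
    using vol by (simp add: card_vectors)
qed

lemma covering_code_labels_agree:
  fixes c :: "'i \<Rightarrow> 'a list" and g :: "'i \<Rightarrow> 'b"
  assumes cover: "\<And>y. length y = m \<Longrightarrow> \<exists>u\<in>U. hamming (c u) y \<le> t"
    and len: "\<And>u. u \<in> U \<Longrightarrow> length (c u) = m"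
    and close: "\<And>u u'. u \<in> U \<Longrightarrow> u' \<in> U \<Longrightarrow> hamming (c u) (c u') \<le> 2 * t + 1 \<Longrightarrow> g u = g u'"
    and "u \<in> U" "v \<in> U"
  shows "g u = g v"
proof -
  have reach: "g w = g v" if "length y = m" "w \<in> U" "hamming (c w) y \<le> t" for y w
    using that
  proof (induction "hamming y (c v)" arbitrary: y w rule: less_induct)
    case less
    show ?case
    proof (cases "y = c v")
      case True
      then show ?thesis
        using close[OF \<open>w \<in> U\<close> \<open>v \<in> U\<close>] less.prems by simp
    next
      case False
      then obtain i where i: "i < length y" "y ! i \<noteq> c v ! i"
        using len[OF \<open>v \<in> U\<close>] less.prems(1) nth_equalityI by metis
      define y' where "y' = y[i := c v ! i]"
      have "hamming y' (c v) < hamming y (c v)"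
        using i False len[OF \<open>v \<in> U\<close>] less.prems(1) hamming_eq_0_iff[of y "c v"]
        by (simp add: y'_def hamming_list_update_nth)
      moreover obtain w' where w': "w' \<in> U" "hamming (c w') y' \<le> t"
        using cover[of y'] less.prems(1) by (auto simp: y'_def)
      ultimately have "g w' = g v"
        using less.hyps less.prems(1) by (simp add: y'_def)
      have "hamming (c w) (c w') \<le> hamming (c w) y + hamming y (c w')"
        using len less.prems w' by (intro hamming_triangle) auto
      also have "hamming y (c w') \<le> hamming y y' + hamming y' (c w')"
        using len less.prems w' by (intro hamming_triangle) (auto simp: y'_def)
      also have "hamming y y' \<le> 1"
        unfolding y'_def by (rule hamming_list_update_le)
      finally have "hamming (c w) (c w') \<le> 2 * t + 1"
        using less.prems(3) w'(2) by (simp add: hamming_sym)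
      then show ?thesis
        using close[OF \<open>w \<in> U\<close> w'(1)] \<open>g w' = g v\<close> by simp
    qed
  qed
  show ?thesis
    using reach[of "c u" u] len \<open>u \<in> U\<close> by simp
qed

lemma perfect_volume_imp_covering_bound:
  assumes perfect: "ball_volume q n t = q ^ (n - k)" and "k \<le> m" "m \<le> n" "q \<ge> 1"
  shows "q ^ m \<le> q ^ k * ball_volume q m t"
proof -
  have "q ^ (n - m) * q ^ m = ball_volume q n t * q ^ k"
    using assms by (simp flip: power_add)
  also have "\<dots> \<le> q ^ (n - m) * ball_volume q m t * q ^ k"
    using ball_volume_add_le[of q m "n - m" t] assms by simp
  finally show ?thesis
    using \<open>q \<ge> 1\<close> by (simp add: algebra_simps)
qed

lemma FCC_redundancy_lower_bound:
  fixes f :: "'a::finite list \<Rightarrow> 'b" and p :: "'a list \<Rightarrow> 'a list"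
  assumes fcc: "is_FCC k f d\<^sub>d d\<^sub>f r p"
    and "2 * t < d\<^sub>d" "2 * t + 1 < d\<^sub>f"
    and nonconst: "card (f ` vectors k) \<ge> 2"
    and perfect: "ball_volume (card (UNIV :: 'a set)) n t = card (UNIV :: 'a set) ^ (n - k)"
    and "k \<le> n"
  shows "n - k < r"
proof (rule ccontr)
  assume "\<not> n - k < r"
  define q where "q = card (UNIV :: 'a set)"
  define c where "c u = u @ p u" for u
  have len: "length (c u) = k + r" if "u \<in> vectors k" for u
    using fcc that by (simp add: c_def is_FCC_def vectors_def)
  have "q ^ (k + r) \<le> card (vectors k :: 'a list set) * ball_volume q (k + r) t"
    using perfect_volume_imp_covering_bound[of q n t k "k + r"] perfect \<open>\<not> n - k < r\<close> \<open>k \<le> n\<close>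
    by (simp add: q_def card_vectors finite_UNIV_card_ge_0 Suc_leI)
  then have ball_cover: "(\<Union>u\<in>vectors k. hamming_ball (c u) t) = vectors (k + r)"
    using fcc \<open>2 * t < d\<^sub>d\<close> len
    by (intro disjoint_hamming_balls_cover finite_vectors)
      (auto simp: q_def c_def is_FCC_def intro: less_le_trans)
  obtain u0 :: "'a list" where u0: "u0 \<in> vectors k"
    using nonconst by fastforce
  have "f u = f u0" if "u \<in> vectors k" for u
  proof (rule covering_code_labels_agree[OF _ len _ that u0])
    show "\<exists>u\<in>vectors k. hamming (c u) y \<le> t" if "length y = k + r" for y
      using that ball_cover by (auto simp: hamming_ball_def vectors_def)
    show "f u = f u'" if "u \<in> vectors k" "u' \<in> vectors k" "hamming (c u) (c u') \<le> 2 * t + 1" for u u'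
      using fcc that \<open>2 * t + 1 < d\<^sub>f\<close> by (force simp: c_def is_FCC_def)
  qed
  then have "f ` vectors k \<subseteq> {f u0}"
    by blast
  then show False
    using nonconst card_mono[of "{f u0}" "f ` vectors k"] by simp
qed

section \<open>Systematic encoding of linear codes\<close>

lemma restrict_nth_surj_insert:
  fixes C :: "'a::field list set"
  assumes surj: "(\<lambda>c. restrict ((!) c) I) ` C = (\<Pi>\<^sub>E i\<in>I. UNIV)"
    and "I \<subseteq> {..<n}"
    and len: "\<And>c. c \<in> C \<Longrightarrow> length c = n"
    and add: "\<And>x y. x \<in> C \<Longrightarrow> y \<in> C \<Longrightarrow> map2 (+) x y \<in> C"
    and smul: "\<And>a x. x \<in> C \<Longrightarrow> map ((*) a) x \<in> C"
    and v: "v \<in> C" "\<forall>i\<in>I. v ! i = 0" "v ! j \<noteq> 0" "j < n"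
  shows "(\<lambda>c. restrict ((!) c) (insert j I)) ` C = (\<Pi>\<^sub>E i\<in>insert j I. UNIV)"
proof
  show "(\<lambda>c. restrict ((!) c) (insert j I)) ` C \<subseteq> (\<Pi>\<^sub>E i\<in>insert j I. UNIV)"
    by (rule image_subsetI) simp
  show "(\<Pi>\<^sub>E i\<in>insert j I. UNIV) \<subseteq> (\<lambda>c. restrict ((!) c) (insert j I)) ` C"
  proof
    fix g :: "nat \<Rightarrow> 'a" assume g: "g \<in> (\<Pi>\<^sub>E i\<in>insert j I. UNIV)"
    have "restrict g I \<in> (\<lambda>c. restrict ((!) c) I) ` C"
      using surj by simp
    then obtain c where c: "c \<in> C" "restrict g I = restrict ((!) c) I"
      by (rule imageE)
    define w where "w = map2 (+) c (map ((*) ((g j - c ! j) / v ! j)) v)"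
    have "w \<in> C"
      unfolding w_def using add smul c v by blast
    moreover have "restrict ((!) w) (insert j I) = g"
    proof
      fix i
      have "w ! i = c ! i + (g j - c ! j) / v ! j * v ! i" if "i \<in> insert j I"
        using that assms c len[of c] len[of v] by (auto simp: w_def)
      then show "restrict ((!) w) (insert j I) i = g i"
        using g v c(2) by (auto simp: restrict_def fun_eq_iff PiE_iff extensional_def split: if_splits)
    qed
    ultimately show "g \<in> (\<lambda>c. restrict ((!) c) (insert j I)) ` C"
      by (metis image_eqI)
  qed
qed

lemma subspace_information_set:
  fixes C :: "'a::field list set"
  assumes sub: "C \<subseteq> vectors n" and zero: "replicate n 0 \<in> C"
    and add: "\<And>x y. x \<in> C \<Longrightarrow> y \<in> C \<Longrightarrow> map2 (+) x y \<in> C"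
    and smul: "\<And>a x. x \<in> C \<Longrightarrow> map ((*) a) x \<in> C"
  obtains I where "I \<subseteq> {..<n}" "bij_betw (\<lambda>c. restrict ((!) c) I) C (\<Pi>\<^sub>E i\<in>I. UNIV)"
proof -
  have len: "\<And>c. c \<in> C \<Longrightarrow> length c = n"
    using sub by (auto simp: vectors_def)
  define F where "F = {I. I \<subseteq> {..<n} \<and> (\<lambda>c. restrict ((!) c) I) ` C = (\<Pi>\<^sub>E i\<in>I. UNIV)}"
  have "finite F"
    unfolding F_def by (rule finite_subset[of _ "Pow {..<n}"]) auto
  moreover have "{} \<in> F"
    unfolding F_def using zero by (auto intro!: image_eqI[of _ _ "replicate n 0"] simp: restrict_def)
  ultimately have "Max (card ` F) \<in> card ` F"
    by (intro Max_in) auto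
  then obtain I :: "nat set" where "I \<in> F" and I_Max: "Max (card ` F) = card I"
    by (rule imageE)
  have I_max: "card J \<le> card I" if "J \<in> F" for J
    using Max_ge[of "card ` F" "card J"] \<open>finite F\<close> that I_Max by simp
  have I: "I \<subseteq> {..<n}" "(\<lambda>c. restrict ((!) c) I) ` C = (\<Pi>\<^sub>E i\<in>I. UNIV)"
    using \<open>I \<in> F\<close> by (simp_all add: F_def)
  \<comment> \<open>Two codewords agreeing on \<open>I\<close> differ by a codeword vanishing on \<open>I\<close>; if it is nonzero at
    \<open>j\<close>, then \<open>insert j I\<close> would be a larger coordinate set onto which \<open>C\<close> projects surjectively.\<close>
  have "inj_on (\<lambda>c. restrict ((!) c) I) C"
  proof (rule inj_onI, rule ccontr)
    fix c c' assume c: "c \<in> C" "c' \<in> C" "restrict ((!) c) I = restrict ((!) c') I" "c \<noteq> c'"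
    then obtain j where j: "j < n" "c ! j \<noteq> c' ! j"
      using len nth_equalityI by metis
    define v where "v = map2 (+) c (map ((*) (-1)) c')"
    have v_nth: "v ! i = c ! i - c' ! i" if "i < n" for i
      using that c len by (simp add: v_def)
    have "v \<in> C"
      unfolding v_def using add smul c by blast
    moreover have "\<forall>i\<in>I. v ! i = 0"
      using c(3) I(1) v_nth by (auto simp: fun_eq_iff restrict_def split: if_splits)
    moreover have "v ! j \<noteq> 0"
      using j v_nth by simp
    ultimately have "insert j I \<in> F"
      using restrict_nth_surj_insert[OF I(2) I(1) len add smul] j by (simp add: F_def I(1))
    moreover have "j \<notin> I"
      using \<open>\<forall>i\<in>I. v ! i = 0\<close> \<open>v ! j \<noteq> 0\<close> by blast
    ultimately show False
      using I_max[of "insert j I"] finite_subset[OF I(1)] by simp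
  qed
  then show ?thesis
    using that I by (simp add: bij_betw_def)
qed

definition systematic_code :: "nat \<Rightarrow> nat \<Rightarrow> nat \<Rightarrow> ('a list \<Rightarrow> 'a list) \<Rightarrow> bool" where
  "systematic_code k d r p \<longleftrightarrow>
     (\<forall>u \<in> vectors k. length (p u) = r) \<and>
     (\<forall>u1 \<in> vectors k. \<forall>u2 \<in> vectors k. u1 \<noteq> u2 \<longrightarrow> d \<le> hamming (u1 @ p u1) (u2 @ p u2))"

lemma systematic_code_of_information_set:
  fixes C :: "'a::finite list set"
  assumes C: "C \<subseteq> vectors n" "card C = card (UNIV :: 'a set) ^ k"
    and dist: "\<And>x y. x \<in> C \<Longrightarrow> y \<in> C \<Longrightarrow> x \<noteq> y \<Longrightarrow> d \<le> hamming x y"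
    and I: "I \<subseteq> {..<n}" "card I = k" "inj_on (\<lambda>c. restrict ((!) c) I) C"
  shows "\<exists>p :: 'a list \<Rightarrow> 'a list. systematic_code k d (n - k) p"
proof -
  define LI where "LI = sorted_list_of_set I"
  define LJ where "LJ = sorted_list_of_set ({..<n} - I)"
  have "finite I"
    using I(1) finite_subset by blast
  then have LI: "set LI = I" "distinct LI" "length LI = k" and LJ: "length LJ = n - k"
    using I by (simp_all add: LI_def LJ_def card_Diff_subset)
  have perm: "distinct (LI @ LJ)" "set (LI @ LJ) = {..<n}"
    using LI I(1) by (auto simp: LJ_def)
  define enc where "enc c = map ((!) c) LI" for c :: "'a list"
  have "inj_on enc C"
  proof (rule inj_onI)
    fix c c' assume "c \<in> C" "c' \<in> C" "enc c = enc c'"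
    then have "restrict ((!) c) I = restrict ((!) c') I"
      using LI(1) by (auto simp: enc_def map_eq_conv restrict_def fun_eq_iff)
    then show "c = c'"
      using I(3) \<open>c \<in> C\<close> \<open>c' \<in> C\<close> by (auto dest: inj_onD)
  qed
  moreover have "enc ` C \<subseteq> vectors k"
    using LI by (auto simp: enc_def vectors_def)
  ultimately have enc_C: "enc ` C = vectors k"
    using C(2) by (intro card_subset_eq finite_vectors) (simp_all add: card_image card_vectors)
  define cw where "cw = inv_into C enc"
  have cw: "cw u \<in> C" "enc (cw u) = u" if "u \<in> vectors k" for u
    using that enc_C by (auto simp: cw_def inv_into_into f_inv_into_f)
  have len_cw: "length (cw u) = n" if "u \<in> vectors k" for u
    using cw(1)[OF that] C(1) by (auto simp: vectors_def)
  define p where "p u = map ((!) (cw u)) LJ" for u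
  have p: "u @ p u = map ((!) (cw u)) (LI @ LJ)" if "u \<in> vectors k" for u
    using cw(2)[OF that] by (simp add: p_def enc_def)
  have "systematic_code k d (n - k) p"
    unfolding systematic_code_def
  proof (intro conjI ballI impI)
    show "length (p u) = n - k" for u
      by (simp add: p_def LJ)
    fix u1 u2 :: "'a list" assume u: "u1 \<in> vectors k" "u2 \<in> vectors k" "u1 \<noteq> u2"
    then have "d \<le> hamming (cw u1) (cw u2)"
      using cw by (metis dist)
    moreover have "hamming (u1 @ p u1) (u2 @ p u2) = hamming (cw u1) (cw u2)"
      unfolding p[OF u(1)] p[OF u(2)]
      by (rule hamming_map_nth_permute) (use perm len_cw u in simp_all)
    ultimately show "d \<le> hamming (u1 @ p u1) (u2 @ p u2)"
      by simp
  qed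
  then show ?thesis
    by blast
qed

lemma two_le_card_field: "2 \<le> card (UNIV :: 'a::{finite,field} set)"
proof -
  have "card {0, 1 :: 'a} \<le> card (UNIV :: 'a set)"
    by (rule card_mono) auto
  then show ?thesis
    by simp
qed

lemma linear_code_systematic:
  fixes C :: "'a::{finite,field} list set"
  assumes "linear_code n k d C"
  shows "k \<le> n" "\<exists>p :: 'a list \<Rightarrow> 'a list. systematic_code k d (n - k) p"
proof -
  obtain I where I: "I \<subseteq> {..<n}" "bij_betw (\<lambda>c. restrict ((!) c) I) C (\<Pi>\<^sub>E i\<in>I. UNIV)"
    using assms subspace_information_set[of C n] unfolding linear_code_def by metis
  have "card (UNIV :: 'a set) ^ k = card (\<Pi>\<^sub>E i\<in>I. (UNIV :: 'a set))"
    using assms bij_betw_same_card[OF I(2)] by (simp add: linear_code_def)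
  also have "\<dots> = card (UNIV :: 'a set) ^ card I"
    using finite_subset[OF I(1)] by (simp add: card_PiE)
  finally have "card I = k"
    using two_le_card_field[where 'a='a] power_inject_exp by (metis Suc_1 Suc_le_lessD)
  then show "k \<le> n"
    using card_mono[OF _ I(1)] by simp
  show "\<exists>p :: 'a list \<Rightarrow> 'a list. systematic_code k d (n - k) p"
    using assms I \<open>card I = k\<close>
    by (intro systematic_code_of_information_set[of C n k d I])
      (auto simp: linear_code_def bij_betw_def)
qed

section \<open>Function-correcting codes for locally binary functions\<close>

definition binary_label :: "nat \<Rightarrow> ('a list \<Rightarrow> 'b) \<Rightarrow> nat \<Rightarrow> 'a list \<Rightarrow> bool" where
  "binary_label k f \<rho> u \<longleftrightarrow> f u = (SOME y. y \<in> fball k f u \<rho>)"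

lemma fball_eq_pair:
  fixes f :: "'a::finite list \<Rightarrow> 'b"
  assumes "locally_binary k f \<rho>" "v \<in> vectors k" "w \<in> vectors k" "hamming v w \<le> \<rho>" "f v \<noteq> f w"
  shows "fball k f v \<rho> = {f v, f w}"
proof (rule card_seteq[symmetric])
  show "finite (fball k f v \<rho>)"
    by (rule finite_subset[of _ "f ` vectors k"]) (auto simp: fball_def finite_vectors)
  show "{f v, f w} \<subseteq> fball k f v \<rho>"
    using assms unfolding fball_def by force
  show "card (fball k f v \<rho>) \<le> card {f v, f w}"
    using assms unfolding locally_binary_def by auto
qed

lemma binary_label_differs:
  fixes f :: "'a::finite list \<Rightarrow> 'b"
  assumes "locally_binary k f \<rho>" "v \<in> vectors k" "w \<in> vectors k" "hamming v w \<le> \<rho>" "f v \<noteq> f w"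
  shows "binary_label k f \<rho> v \<noteq> binary_label k f \<rho> w"
proof -
  have "fball k f v \<rho> = {f v, f w}" "fball k f w \<rho> = {f v, f w}"
    using fball_eq_pair[of k f \<rho>] assms by (auto simp: hamming_sym)
  moreover have "(SOME y. y \<in> {f v, f w}) \<in> {f v, f w}"
    by (rule someI_ex) auto
  ultimately show ?thesis
    using assms(5) by (auto simp: binary_label_def)
qed

lemma FCC_of_systematic_code:
  fixes f :: "'a::{finite,zero_neq_one} list \<Rightarrow> 'b"
  assumes sys: "systematic_code k d r p" and lb: "locally_binary k f d"
  shows "is_FCC k f d (d + 1) (r + 1) (\<lambda>u. p u @ [if binary_label k f d u then 1 else 0])"
  unfolding is_FCC_def
proof (intro conjI ballI impI)
  fix u :: "'a list" assume "u \<in> vectors k"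
  then show "length (p u @ [if binary_label k f d u then 1 else 0]) = r + 1"
    using sys by (simp add: systematic_code_def)
next
  fix u1 u2 :: "'a list" assume u: "u1 \<in> vectors k" "u2 \<in> vectors k"
  let ?h = "hamming (u1 @ p u1) (u2 @ p u2)"
  let ?b = "\<lambda>u. [if binary_label k f d u then 1 else (0 :: 'a)]"
  have "length (u1 @ p u1) = length (u2 @ p u2)"
    using sys u by (simp add: systematic_code_def vectors_def)
  then have h: "hamming (u1 @ p u1 @ ?b u1) (u2 @ p u2 @ ?b u2)
      = ?h + (if binary_label k f d u1 = binary_label k f d u2 then 0 else 1)"
    using hamming_append[of "u1 @ p u1" "u2 @ p u2" "?b u1" "?b u2"] by (simp add: hamming_Cons)
  have dist: "d \<le> ?h" if "u1 \<noteq> u2"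
    using sys u that by (simp add: systematic_code_def)
  then show "d \<le> hamming (u1 @ p u1 @ ?b u1) (u2 @ p u2 @ ?b u2)" if "u1 \<noteq> u2"
    using that h by simp
  assume "f u1 \<noteq> f u2"
  show "d + 1 \<le> hamming (u1 @ p u1 @ ?b u1) (u2 @ p u2 @ ?b u2)"
  proof (cases "d + 1 \<le> ?h")
    case False
    have "hamming u1 u2 \<le> ?h"
      using u hamming_append[of u1 u2 "p u1" "p u2"] by (simp add: vectors_def)
    with False have "binary_label k f d u1 \<noteq> binary_label k f d u2"
      using binary_label_differs[OF lb u] \<open>f u1 \<noteq> f u2\<close> by simp
    moreover have "d \<le> ?h"
      using dist \<open>f u1 \<noteq> f u2\<close> by blast
    ultimately show ?thesis
      using h by simp
  qed (use h in simp)
qed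

theorem corollary8:
  fixes f :: "('a::{finite,field}) list \<Rightarrow> 'b"
    and k n t\<^sub>d d\<^sub>d :: nat
  assumes "d\<^sub>d = 2 * t\<^sub>d + 1"
    and "locally_binary k f d\<^sub>d"
    and "card (f ` vectors k) \<ge> 2"
    and "\<exists>C :: 'a list set. perfect_linear_code n k d\<^sub>d C"
  shows "min_redundancy TYPE('a) k f d\<^sub>d (d\<^sub>d + 1) = n - k + 1"
proof -
  obtain C :: "'a list set" where "linear_code n k d\<^sub>d C"
    and perfect: "ball_volume (card (UNIV :: 'a set)) n t\<^sub>d = card (UNIV :: 'a set) ^ (n - k)"
    using assms(1,4) by (auto simp: perfect_linear_code_def ball_volume_def)
  then obtain p :: "'a list \<Rightarrow> 'a list" where "k \<le> n" "systematic_code k d\<^sub>d (n - k) p"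
    using linear_code_systematic by metis
  then have "\<exists>p :: 'a list \<Rightarrow> 'a list. is_FCC k f d\<^sub>d (d\<^sub>d + 1) (n - k + 1) p"
    using FCC_of_systematic_code assms(2) by blast
  moreover have "n - k + 1 \<le> r" if "is_FCC k f d\<^sub>d (d\<^sub>d + 1) r p'" for r and p' :: "'a list \<Rightarrow> 'a list"
    using FCC_redundancy_lower_bound[OF that _ _ assms(3) perfect \<open>k \<le> n\<close>] assms(1) by simp
  ultimately show ?thesis
    unfolding min_redundancy_def by (intro Least_equality) auto
qed

end
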